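(* Let $X_n$ and $Y_n$ be random variables taking values in countable sets $\mathcal X_n$ and $\mathcal Y_n$, with pmfs $P_{X_n}$, $P_{Y_n}$. Let $\epsilon\in(0,1)$ and $\gamma>0$ satisfy $e^{-\gamma}\le\epsilon$. Define $$\mathcal E^n(\gamma)=\{\delta\in[0,1): c_n^x(\delta)-c_n^y(\delta)<\gamma\}.$$ Then there exists a (deterministic) map $\phi_n:\mathcal X_n\to\mathcal Y_n$ such that $$d\big(P_{Y_n},P_{\phi_n(X_n)}\big)\le 9\epsilon+10\,\mu(\mathcal E^n(\gamma)).$$
   Context: Logarithms are natural. For a random variable $Z$ on a countable set $\mathcal Z$ with pmf $P_Z$, list the elements of positive probability as $z_1,z_2,\dots$ (a finite or countably infinite list) with $P_Z(z_1)\ge P_Z(z_2)\ge\cdots$ (ties broken arbitrarily). Set $\delta_0=0$ and $\delta_k=\sum_{i\le k}P_Z(z_i)$. For $\delta\in[0,1)$ define $c^z(\delta)=\log\frac{1}{P_Z(z_k)}$, where $k$ is the unique index with $\delta\in[\delta_{k-1},\delta_k)$. This is a nonnegative, nondecreasing, right-continuous step function on $[0,1)$ that does not depend on the tie-breaking. Here $c_n^x$ and $c_n^y$ denote this function built from $P_{X_n}$ and from $P_{Y_n}$ respectively. The variational distance between pmfs $P,Q$ on a countable set is $d(P,Q)=\sum_a|P(a)-Q(a)|$ (no factor $1/2$). $\mu$ denotes Lebesgue measure on $\mathbb R$. *)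

theory Defs
  imports "HOL-Probability.Probability"
begin

text \<open>Index set of the (finite or countably infinite) list of elements of positive probability,
  indexed from 0.\<close>
definition pos_index :: "'a pmf \<Rightarrow> nat set" where
  "pos_index p = (if finite (set_pmf p) then {..<card (set_pmf p)} else UNIV)"

definition desc_enum :: "'a pmf \<Rightarrow> (nat \<Rightarrow> 'a) \<Rightarrow> bool" where
  "desc_enum p z \<longleftrightarrow> bij_betw z (pos_index p) (set_pmf p) \<and>
     (\<forall>i\<in>pos_index p. \<forall>j\<in>pos_index p. i \<le> j \<longrightarrow> pmf p (z j) \<le> pmf p (z i))"

text \<open>The function c^z: with delta_k = sum_{i<k} P(z_i) (0-based), c(delta) = log(1/P(z_k))
  where k is the unique index with delta_k \<le> delta < delta_(k+1). The listing is chosen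
  arbitrarily among nonincreasing listings (the value does not depend on tie-breaking).\<close>
definition cfun :: "'a pmf \<Rightarrow> real \<Rightarrow> real" where
  "cfun p \<delta> = (let z = (SOME z. desc_enum p z);
       k = (THE k. k \<in> pos_index p \<and> (\<Sum>i<k. pmf p (z i)) \<le> \<delta> \<and> \<delta> < (\<Sum>i<Suc k. pmf p (z i)))
     in ln (1 / pmf p (z k)))"

text \<open>Variational distance without the factor 1/2.\<close>
definition vdist :: "'a pmf \<Rightarrow> 'a pmf \<Rightarrow> real" where
  "vdist P Q = (\<Sum>\<^sub>\<infinity>a. \<bar>pmf P a - pmf Q a\<bar>)"

end

theory Submission
  imports Defs
begin

(* Proof idea: the quantile coupling.
   List the support of a pmf p in nonincreasing order z_0, z_1, ... with cumulative sums
   S_k = p(z_0) + ... + p(z_(k-1)).  For delta uniform on [0,1) let k(delta) be its bucket,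
   the index with S_k <= delta < S_(k+1).  Then z_(k(delta)) has law p and
   c(delta) = log (1 / p(z_(k(delta)))).  Feed the same delta to both X and Y and map the
   i-th element of the X-list to the element of the Y-list whose bucket contains the left
   end S^x_i of the i-th X-bucket.  The images disagree with Y only on X-buckets that cross
   the right end of a Y-bucket j.  A crossing X-bucket either has weight above
   exp(-gamma) * P_Y(z^y_j), and then its points lie in E(gamma), or it is the unique X-bucket
   crossing the right end of bucket j and has weight at most exp(-gamma) * P_Y(z^y_j);
   summing over j the disagreement has probability at most exp(-gamma) + mu(E) <= eps + mu(E).
   The coupling inequality turns this into d <= 2 eps + 2 mu(E) <= 9 eps + 10 mu(E).
   The file develops: buckets of a weight sequence and their law under the uniform measure;
   existence of a nonincreasing enumeration of a support (a greedy construction); the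
   description of cfun through buckets; the coupling inequality; the mismatch bound for the
   transport map; and finally the theorem. *)

section \<open>Buckets of a weight sequence\<close>

text \<open>A weight sequence is a nonnegative sequence summing to 1; its cumulative sums cut
  [0,1) into consecutive buckets of lengths w 0, w 1, ...\<close>
locale weight_seq =
  fixes w :: "nat \<Rightarrow> real"
  assumes nonneg: "\<And>i. 0 \<le> w i"
    and sums_one: "w sums 1"
begin

definition cum :: "nat \<Rightarrow> real" where
  "cum k = (\<Sum>i<k. w i)"

lemma cum_0 [simp]: "cum 0 = 0"
  by (simp add: cum_def)

lemma cum_Suc: "cum (Suc k) = cum k + w k"
  by (simp add: cum_def)

lemma cum_mono: "k \<le> k' \<Longrightarrow> cum k \<le> cum k'"
  unfolding cum_def by (rule sum_mono2) (auto simp: nonneg)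

lemma cum_nonneg: "0 \<le> cum k"
  using cum_mono[of 0 k] by simp

lemma cum_le_1: "cum k \<le> 1"
proof -
  have "cum k \<le> suminf w"
    unfolding cum_def by (rule sum_le_suminf) (use sums_one nonneg in \<open>auto simp: sums_iff\<close>)
  then show ?thesis
    using sums_one by (simp add: sums_iff)
qed

lemma cum_lt_1: "0 < w k \<Longrightarrow> cum k < 1"
  using cum_le_1[of "Suc k"] by (simp add: cum_Suc)

lemma cum_tendsto: "cum \<longlonglongrightarrow> 1"
  using sums_one unfolding sums_def cum_def[abs_def] .

lemma bucket_ex1:
  assumes "\<delta> \<in> {0..<1}"
  shows "\<exists>!k. cum k \<le> \<delta> \<and> \<delta> < cum (Suc k)"
proof -
  have "\<exists>n. \<delta> < cum n"
    using order_tendstoD(1)[OF cum_tendsto, of \<delta>] assms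
    by (auto dest: eventually_happens)
  define m where "m = (LEAST n. \<delta> < cum n)"
  have m: "\<delta> < cum m"
    unfolding m_def by (rule LeastI_ex) fact
  have "m \<noteq> 0"
    using m assms by (intro notI) simp
  then obtain k where k: "m = Suc k"
    by (cases m) auto
  have "\<not> \<delta> < cum k"
    using k unfolding m_def by (metis Suc_n_not_le_n Least_le)
  then have ex: "cum k \<le> \<delta> \<and> \<delta> < cum (Suc k)"
    using m k by auto
  show ?thesis
  proof (rule ex1I[of _ k])
    fix k' assume k': "cum k' \<le> \<delta> \<and> \<delta> < cum (Suc k')"
    show "k' = k"
    proof (rule ccontr)
      assume "k' \<noteq> k"
      then consider "Suc k \<le> k'" | "Suc k' \<le> k"
        by linarith
      then show False
        by cases (use ex k' cum_mono in \<open>fastforce+\<close>)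
    qed
  qed (fact ex)
qed

definition bucket :: "real \<Rightarrow> nat" where
  "bucket \<delta> = (THE k. cum k \<le> \<delta> \<and> \<delta> < cum (Suc k))"

lemma bucket: "\<delta> \<in> {0..<1} \<Longrightarrow> cum (bucket \<delta>) \<le> \<delta> \<and> \<delta> < cum (Suc (bucket \<delta>))"
  unfolding bucket_def by (rule theI') (rule bucket_ex1)

lemma bucket_eq: "\<delta> \<in> {0..<1} \<Longrightarrow> bucket \<delta> = k \<longleftrightarrow> cum k \<le> \<delta> \<and> \<delta> < cum (Suc k)"
  using bucket bucket_ex1 by blast

lemma bucket_pos: "\<delta> \<in> {0..<1} \<Longrightarrow> 0 < w (bucket \<delta>)"
  using bucket[of \<delta>] by (simp add: cum_Suc)

lemma bucket_mono:
  assumes "\<delta> \<in> {0..<1}" "\<delta>' \<in> {0..<1}" "\<delta> \<le> \<delta>'"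
  shows "bucket \<delta> \<le> bucket \<delta>'"
proof (rule ccontr)
  assume "\<not> bucket \<delta> \<le> bucket \<delta>'"
  then have "cum (Suc (bucket \<delta>')) \<le> cum (bucket \<delta>)"
    by (intro cum_mono) auto
  with bucket[OF assms(1)] bucket[OF assms(2)] assms(3) show False
    by linarith
qed

lemma bucket_left_end: "\<delta> \<in> {0..<1} \<Longrightarrow> cum (bucket \<delta>) \<in> {0..<1}"
  using cum_lt_1[OF bucket_pos] cum_nonneg by simp

lemma bucket_fibre: "{\<delta>\<in>{0..<1}. bucket \<delta> = k} = {cum k..<cum (Suc k)}"
  using bucket_eq cum_nonneg[of k] cum_le_1[of "Suc k"] by fastforce

end


definition uniform01 :: "real measure" where
  "uniform01 = restrict_space lborel {0..<1}"

lemma space_uniform01 [simp]: "space uniform01 = {0..<1}"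
  by (simp add: uniform01_def space_restrict_space)

lemma sets_uniform01: "A \<in> sets uniform01 \<longleftrightarrow> A \<subseteq> {0..<1} \<and> A \<in> sets lborel"
  unfolding uniform01_def by (rule sets_restrict_space_iff) simp

lemma measure_uniform01: "A \<subseteq> {0..<1} \<Longrightarrow> measure uniform01 A = measure lborel A"
  unfolding uniform01_def by (rule measure_restrict_space) auto

interpretation uniform01: prob_space uniform01
proof (rule prob_spaceI)
  have "emeasure uniform01 {0..<1} = emeasure lborel {0..<(1::real)}"
    unfolding uniform01_def by (rule emeasure_restrict_space) auto
  then show "emeasure uniform01 (space uniform01) = 1"
    by simp
qed

lemma countable_pred_sets:
  fixes f :: "'a \<Rightarrow> 'b::countable" and g :: "'a \<Rightarrow> 'c::countable"
  assumes "f \<in> M \<rightarrow>\<^sub>M count_space UNIV" "g \<in> M \<rightarrow>\<^sub>M count_space UNIV"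
  shows "{x\<in>space M. P (f x) (g x)} \<in> sets M"
proof -
  have "Measurable.pred M (\<lambda>x. P (f x) (g x))"
    using assms by measurable
  then show ?thesis
    by (simp add: pred_def)
qed

context weight_seq
begin

lemma bucket_fibre_sets: "{\<delta>\<in>{0..<1}. bucket \<delta> = k} \<in> sets uniform01"
  unfolding bucket_fibre sets_uniform01 using cum_nonneg[of k] cum_le_1[of "Suc k"] by auto

lemma bucket_measurable: "bucket \<in> uniform01 \<rightarrow>\<^sub>M count_space UNIV"
proof (subst measurable_count_space_eq_countable[OF countableI_type], intro conjI ballI)
  fix k :: nat
  have "bucket -` {k} \<inter> space uniform01 = {\<delta>\<in>{0..<1}. bucket \<delta> = k}"
    by auto
  then show "bucket -` {k} \<inter> space uniform01 \<in> sets uniform01"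
    using bucket_fibre_sets by simp
qed simp

lemma measure_bucket_fibre: "measure uniform01 {\<delta>\<in>{0..<1}. bucket \<delta> = k} = w k"
proof -
  have "{cum k..<cum (Suc k)} \<subseteq> {0..<1}"
    using cum_nonneg[of k] cum_le_1[of "Suc k"] by auto
  then show ?thesis
    unfolding bucket_fibre by (simp add: measure_uniform01 cum_Suc nonneg)
qed

end


section \<open>Nonincreasing enumerations of a support\<close>

lemma finite_pmf_ge:
  fixes p :: "'a pmf"
  assumes "0 < t"
  shows "finite {a. t \<le> pmf p a}"
proof -
  have "card G \<le> nat (ceiling (1 / t))" if "G \<subseteq> {a. t \<le> pmf p a}" "finite G" for G
  proof -
    have "real (card G) * t = (\<Sum>a\<in>G. t)"
      by simp
    also have "\<dots> \<le> (\<Sum>a\<in>G. pmf p a)"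
      using that by (intro sum_mono) auto
    also have "\<dots> = measure_pmf.prob p G"
      using that by (simp add: measure_measure_pmf_finite)
    also have "\<dots> \<le> 1"
      by simp
    finally have "real (card G) \<le> 1 / t"
      using assms by (simp add: field_simps)
    then show ?thesis
      by linarith
  qed
  then show ?thesis
    using finite_if_finite_subsets_card_bdd by blast
qed

text \<open>The greedy step: a point of maximal probability among the support points outside A.
  It exists because above any positive level there are only finitely many points.\<close>
definition greedy_pick :: "'a pmf \<Rightarrow> 'a set \<Rightarrow> 'a" where
  "greedy_pick p A = (SOME a. a \<in> set_pmf p - A \<and> (\<forall>b\<in>set_pmf p - A. pmf p b \<le> pmf p a))"

lemma greedy_pick:
  assumes "set_pmf p - A \<noteq> {}"
  shows "greedy_pick p A \<in> set_pmf p - A"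
    and "\<And>b. b \<in> set_pmf p - A \<Longrightarrow> pmf p b \<le> pmf p (greedy_pick p A)"
proof -
  obtain a0 where a0: "a0 \<in> set_pmf p - A"
    using assms by auto
  define F where "F = {b\<in>set_pmf p - A. pmf p a0 \<le> pmf p b}"
  have "finite F"
    unfolding F_def using finite_pmf_ge[of "pmf p a0" p] a0
    by (auto intro: finite_subset simp: pmf_positive)
  moreover have "a0 \<in> F"
    using a0 by (simp add: F_def)
  ultimately have "Max (pmf p ` F) \<in> pmf p ` F"
    by (intro Max_in) auto
  then obtain a where a: "a \<in> F" "pmf p a = Max (pmf p ` F)"
    by auto
  have "pmf p b \<le> pmf p a" if b: "b \<in> set_pmf p - A" for b
  proof (cases "b \<in> F")
    case True
    then show ?thesis
      using a \<open>finite F\<close> by simp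
  next
    case False
    then have "pmf p b < pmf p a0"
      using b by (auto simp: F_def)
    also have "pmf p a0 \<le> pmf p a"
      using a by (simp add: F_def)
    finally show ?thesis
      by simp
  qed
  then have "a \<in> set_pmf p - A \<and> (\<forall>b\<in>set_pmf p - A. pmf p b \<le> pmf p a)"
    using a by (simp add: F_def)
  then have "greedy_pick p A \<in> set_pmf p - A \<and>
      (\<forall>b\<in>set_pmf p - A. pmf p b \<le> pmf p (greedy_pick p A))"
    unfolding greedy_pick_def by (rule someI)
  then show "greedy_pick p A \<in> set_pmf p - A"
    and "\<And>b. b \<in> set_pmf p - A \<Longrightarrow> pmf p b \<le> pmf p (greedy_pick p A)"
    by auto
qed

primrec greedy_prefix :: "'a pmf \<Rightarrow> nat \<Rightarrow> 'a set" where
  "greedy_prefix p 0 = {}"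
| "greedy_prefix p (Suc n) = insert (greedy_pick p (greedy_prefix p n)) (greedy_prefix p n)"

definition greedy_enum :: "'a pmf \<Rightarrow> nat \<Rightarrow> 'a" where
  "greedy_enum p n = greedy_pick p (greedy_prefix p n)"

lemma greedy_prefix_eq: "greedy_prefix p n = greedy_enum p ` {..<n}"
  by (induction n) (auto simp: greedy_enum_def lessThan_Suc)

lemma greedy_rest:
  assumes "n \<in> pos_index p"
  shows "set_pmf p - greedy_prefix p n \<noteq> {}"
proof
  assume "set_pmf p - greedy_prefix p n = {}"
  then have sub: "set_pmf p \<subseteq> greedy_prefix p n"
    by blast
  have fin: "finite (greedy_prefix p n)" and card: "card (greedy_prefix p n) \<le> n"
    unfolding greedy_prefix_eq using card_image_le[of "{..<n}" "greedy_enum p"] by auto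
  then have "finite (set_pmf p)"
    using sub finite_subset by blast
  moreover have "card (set_pmf p) \<le> n"
    using card_mono[OF fin sub] card by simp
  ultimately show False
    using assms by (simp add: pos_index_def)
qed

lemma greedy_enum_in:
  "n \<in> pos_index p \<Longrightarrow> greedy_enum p n \<in> set_pmf p - greedy_prefix p n"
  unfolding greedy_enum_def by (rule greedy_pick(1)[OF greedy_rest])

lemma greedy_enum_max:
  "n \<in> pos_index p \<Longrightarrow> b \<in> set_pmf p - greedy_prefix p n \<Longrightarrow> pmf p b \<le> pmf p (greedy_enum p n)"
  unfolding greedy_enum_def by (rule greedy_pick(2)[OF greedy_rest])

lemma greedy_enum_inj: "inj_on (greedy_enum p) (pos_index p)"
proof (rule inj_onI)
  fix i j assume ij: "i \<in> pos_index p" "j \<in> pos_index p" "greedy_enum p i = greedy_enum p j"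
  show "i = j"
  proof (rule ccontr)
    assume "i \<noteq> j"
    then consider "i < j" | "j < i"
      by linarith
    then show False
    proof cases
      case 1
      then have "greedy_enum p i \<in> greedy_prefix p j"
        by (simp add: greedy_prefix_eq)
      then show False
        using greedy_enum_in[OF ij(2)] ij(3) by simp
    next
      case 2
      then have "greedy_enum p j \<in> greedy_prefix p i"
        by (simp add: greedy_prefix_eq)
      then show False
        using greedy_enum_in[OF ij(1)] ij(3) by simp
    qed
  qed
qed

text \<open>The greedy enumeration exhausts the support: a point never picked would be
  dominated by infinitely many distinct picks, contradicting finite_pmf_ge.\<close>
lemma greedy_enum_image: "greedy_enum p ` pos_index p = set_pmf p"
proof (cases "finite (set_pmf p)")
  case True
  have "card (greedy_enum p ` pos_index p) = card (set_pmf p)"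
    using greedy_enum_inj[of p] True by (simp add: card_image pos_index_def)
  moreover have "greedy_enum p ` pos_index p \<subseteq> set_pmf p"
    using greedy_enum_in by auto
  ultimately show ?thesis
    using True by (simp add: card_subset_eq)
next
  case False
  then have all: "pos_index p = UNIV"
    by (simp add: pos_index_def)
  have "a \<in> range (greedy_enum p)" if a: "a \<in> set_pmf p" for a
  proof (rule ccontr)
    assume na: "a \<notin> range (greedy_enum p)"
    have "range (greedy_enum p) \<subseteq> {b. pmf p a \<le> pmf p b}"
      using greedy_enum_max[of _ p a] a na all by (auto simp: greedy_prefix_eq)
    then have "finite (range (greedy_enum p))"
      using finite_pmf_ge[of "pmf p a" p] a by (auto intro: finite_subset simp: pmf_positive)
    then show False
      using greedy_enum_inj[of p] all by (simp add: finite_image_iff)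
  qed
  then show ?thesis
    using greedy_enum_in all by auto
qed

lemma desc_enum_exists: "\<exists>z. desc_enum p z"
proof -
  have "desc_enum p (greedy_enum p)"
    unfolding desc_enum_def
  proof safe
    show "bij_betw (greedy_enum p) (pos_index p) (set_pmf p)"
      by (simp add: bij_betw_def greedy_enum_inj greedy_enum_image)
  next
    fix i j assume ij: "i \<in> pos_index p" "j \<in> pos_index p" "i \<le> j"
    have "greedy_enum p j \<in> set_pmf p - greedy_prefix p i"
      using greedy_enum_in[OF ij(2)] ij(3) by (auto simp: greedy_prefix_eq)
    then show "pmf p (greedy_enum p j) \<le> pmf p (greedy_enum p i)"
      using greedy_enum_max[OF ij(1)] by simp
  qed
  then show ?thesis
    by blast
qed


definition enum :: "'a pmf \<Rightarrow> nat \<Rightarrow> 'a" where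
  "enum p = (SOME z. desc_enum p z)"

definition weights :: "'a pmf \<Rightarrow> nat \<Rightarrow> real" where
  "weights p i = (if i \<in> pos_index p then pmf p (enum p i) else 0)"

lemma enum_desc: "desc_enum p (enum p)"
  unfolding enum_def using desc_enum_exists[of p] by (rule someI_ex)

lemma enum_bij: "bij_betw (enum p) (pos_index p) (set_pmf p)"
  using enum_desc[of p] by (simp add: desc_enum_def)

lemma pos_index_down: "j \<in> pos_index p \<Longrightarrow> i \<le> j \<Longrightarrow> i \<in> pos_index p"
  by (auto simp: pos_index_def split: if_splits)

lemma weights_pos_iff: "0 < weights p i \<longleftrightarrow> i \<in> pos_index p"
  using bij_betw_apply[OF enum_bij[of p]] by (auto simp: weights_def intro: pmf_positive)

lemma weights_antimono: "i \<le> j \<Longrightarrow> weights p j \<le> weights p i"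
  using enum_desc[of p] pos_index_down[of j p i] by (auto simp: weights_def desc_enum_def)

lemma pmf_has_sum: "(pmf p has_sum 1) (set_pmf p)"
proof -
  note abs = pmf_abs_summable[of p "set_pmf p"]
  then have "(\<lambda>x. norm (pmf p x)) summable_on set_pmf p"
    using abs_summable_equivalent by blast
  then have "pmf p summable_on set_pmf p"
    by simp
  moreover have "infsum (pmf p) (set_pmf p) = 1"
    using infsetsum_infsum[OF abs] infsetsum_pmf_eq_1[of p "set_pmf p"] by simp
  ultimately show ?thesis
    using has_sum_infsum by fastforce
qed

lemma weights_weight_seq: "weight_seq (weights p)"
proof
  show "0 \<le> weights p i" for i
    by (simp add: weights_def)
next
  have "((\<lambda>i. pmf p (enum p i)) has_sum 1) (pos_index p)"
    using has_sum_reindex_bij_betw[OF enum_bij[of p], where f = "pmf p"] pmf_has_sum[of p] by simp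
  then have "(weights p has_sum 1) UNIV"
    by (rule has_sum_cong_neutral[THEN iffD1, rotated -1]) (auto simp: weights_def)
  then show "weights p sums 1"
    by (rule has_sum_imp_sums)
qed

lemma cfun_bucket:
  assumes d: "\<delta> \<in> {0..<1}"
  shows "cfun p \<delta> = ln (1 / weights p (weight_seq.bucket (weights p) \<delta>))"
proof -
  interpret weight_seq "weights p"
    by (rule weights_weight_seq)
  have cum_eq: "(\<Sum>i<m. pmf p (enum p i)) = cum m" if "m \<le> Suc k" "k \<in> pos_index p" for m k
    unfolding cum_def using that pos_index_down[of k p] by (intro sum.cong) (auto simp: weights_def)
  have in_bucket: "k \<in> pos_index p \<and> (\<Sum>i<k. pmf p (enum p i)) \<le> \<delta> \<and> \<delta> < (\<Sum>i<Suc k. pmf p (enum p i))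
      \<longleftrightarrow> k = bucket \<delta>" for k
    using bucket_eq[OF d, of k] cum_eq[of k k] cum_eq[of "Suc k" k] bucket_pos[OF d] weights_pos_iff
    by (auto simp: cum_Suc weights_def)
  have "(THE k. k \<in> pos_index p \<and> (\<Sum>i<k. pmf p (enum p i)) \<le> \<delta> \<and> \<delta> < (\<Sum>i<Suc k. pmf p (enum p i)))
      = bucket \<delta>"
    unfolding in_bucket by simp
  moreover have "bucket \<delta> \<in> pos_index p"
    using bucket_pos[OF d] weights_pos_iff by blast
  ultimately show ?thesis
    unfolding cfun_def enum_def[symmetric] Let_def by (simp add: weights_def)
qed

lemma distr_enum_bucket:
  fixes p :: "'a::countable pmf"
  shows "distr uniform01 (count_space UNIV) (\<lambda>\<delta>. enum p (weight_seq.bucket (weights p) \<delta>))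
    = measure_pmf p"
proof -
  interpret weight_seq "weights p"
    by (rule weights_weight_seq)
  let ?f = "\<lambda>\<delta>. enum p (bucket \<delta>)"
  have m: "?f \<in> uniform01 \<rightarrow>\<^sub>M count_space UNIV"
    by (rule measurable_compose[OF bucket_measurable measurable_count_space])
  have in_pos: "\<delta> \<in> {0..<1} \<Longrightarrow> bucket \<delta> \<in> pos_index p" for \<delta>
    using bucket_pos weights_pos_iff by blast
  have "measure uniform01 (?f -` {a} \<inter> space uniform01) = pmf p a" for a
  proof (cases "a \<in> set_pmf p")
    case True
    then obtain i where i: "i \<in> pos_index p" "a = enum p i"
      using bij_betw_imp_surj_on[OF enum_bij[of p]] by auto
    have "?f -` {a} \<inter> space uniform01 = {\<delta>\<in>{0..<1}. bucket \<delta> = i}"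
      using i in_pos inj_onD[OF bij_betw_imp_inj_on[OF enum_bij[of p]]] by auto
    then show ?thesis
      using measure_bucket_fibre[of i] i by (simp add: weights_def)
  next
    case False
    then have "?f -` {a} \<inter> space uniform01 = {}"
      using in_pos bij_betw_apply[OF enum_bij[of p]] by auto
    then show ?thesis
      using False by (simp add: set_pmf_iff)
  qed
  then have "emeasure (distr uniform01 (count_space UNIV) ?f) {a} = emeasure (measure_pmf p) {a}" for a
    by (simp add: emeasure_distr[OF m] uniform01.emeasure_eq_measure emeasure_pmf_single)
  then show ?thesis
    by (intro measure_eqI_countable[where A = UNIV]) auto
qed


section \<open>The coupling inequality\<close>

context finite_measure
begin

lemma fibre_excess:
  assumes f: "f \<in> M \<rightarrow>\<^sub>M count_space UNIV" and g: "g \<in> M \<rightarrow>\<^sub>M count_space UNIV"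
    and D: "D \<in> sets M" and diff: "{x\<in>space M. f x \<noteq> g x} \<subseteq> D"
  shows "measure M (f -` {b} \<inter> space M) - measure M (g -` {b} \<inter> space M)
    \<le> measure M (D \<inter> (f -` {b} \<inter> space M))"
proof -
  let ?F = "f -` {b} \<inter> space M" and ?G = "g -` {b} \<inter> space M"
  have sets: "?F \<in> sets M" "?G \<in> sets M"
    using measurable_sets[OF f, of "{b}"] measurable_sets[OF g, of "{b}"] by auto
  have "measure M ?F \<le> measure M (?G \<union> (D \<inter> ?F))"
    using diff sets D by (intro finite_measure_mono) auto
  also have "\<dots> \<le> measure M ?G + measure M (D \<inter> ?F)"
    using sets D by (intro measure_subadditive) auto
  finally show ?thesis
    by simp
qed

lemma fibres_summable:
  fixes f :: "'a \<Rightarrow> 'b::countable"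
  assumes f: "f \<in> M \<rightarrow>\<^sub>M count_space UNIV" and D: "D \<in> sets M"
  shows "(\<lambda>b. measure M (D \<inter> (f -` {b} \<inter> space M))) summable_on UNIV"
    and "(\<Sum>\<^sub>\<infinity>b. measure M (D \<inter> (f -` {b} \<inter> space M))) \<le> measure M D"
proof -
  have sets: "D \<inter> (f -` {b} \<inter> space M) \<in> sets M" for b
    using D measurable_sets[OF f, of "{b}"] by auto
  have bound: "(\<Sum>b\<in>B. measure M (D \<inter> (f -` {b} \<inter> space M))) \<le> measure M D" if "finite B" for B
  proof -
    have "(\<Sum>b\<in>B. measure M (D \<inter> (f -` {b} \<inter> space M))) = measure M (\<Union>b\<in>B. D \<inter> (f -` {b} \<inter> space M))"
      using that sets by (intro finite_measure_finite_Union[symmetric]) (auto simp: disjoint_family_on_def)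
    also have "\<dots> \<le> measure M D"
      using D by (intro finite_measure_mono) auto
    finally show ?thesis .
  qed
  show summable: "(\<lambda>b. measure M (D \<inter> (f -` {b} \<inter> space M))) summable_on UNIV"
    using bound by (intro nonneg_bdd_above_summable_on) (auto simp: bdd_above_def)
  show "(\<Sum>\<^sub>\<infinity>b. measure M (D \<inter> (f -` {b} \<inter> space M))) \<le> measure M D"
    using summable bound by (intro infsum_le_finite_sums) auto
qed

lemma coupling_inequality:
  fixes f g :: "'a \<Rightarrow> 'b::countable"
  assumes f: "f \<in> M \<rightarrow>\<^sub>M count_space UNIV" and g: "g \<in> M \<rightarrow>\<^sub>M count_space UNIV"
    and D: "D \<in> sets M" and diff: "{x\<in>space M. f x \<noteq> g x} \<subseteq> D"
  shows "(\<Sum>\<^sub>\<infinity>b. \<bar>measure M (f -` {b} \<inter> space M) - measure M (g -` {b} \<inter> space M)\<bar>)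
    \<le> 2 * measure M D"
proof -
  define a where "a b = measure M (D \<inter> (f -` {b} \<inter> space M))" for b
  define c where "c b = measure M (D \<inter> (g -` {b} \<inter> space M))" for b
  have diff': "{x\<in>space M. g x \<noteq> f x} \<subseteq> D"
    using diff by auto
  have le: "\<bar>measure M (f -` {b} \<inter> space M) - measure M (g -` {b} \<inter> space M)\<bar> \<le> a b + c b" for b
    using fibre_excess[OF f g D diff, of b] fibre_excess[OF g f D diff', of b]
    unfolding a_def c_def by (smt (verit) measure_nonneg)
  have a: "a summable_on UNIV" "infsum a UNIV \<le> measure M D"
    using fibres_summable[OF f D] by (simp_all add: a_def[abs_def])
  have c: "c summable_on UNIV" "infsum c UNIV \<le> measure M D"
    using fibres_summable[OF g D] by (simp_all add: c_def[abs_def])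
  have ac: "(\<lambda>b. a b + c b) summable_on UNIV"
    using a c by (intro summable_on_add)
  have "(\<Sum>\<^sub>\<infinity>b. \<bar>measure M (f -` {b} \<inter> space M) - measure M (g -` {b} \<inter> space M)\<bar>)
      \<le> (\<Sum>\<^sub>\<infinity>b. a b + c b)"
    by (rule infsum_mono[OF summable_on_comparison_test[OF ac] ac le]) (use le in auto)
  also have "\<dots> = infsum a UNIV + infsum c UNIV"
    using a c by (intro infsum_add) auto
  also have "\<dots> \<le> 2 * measure M D"
    using a c by simp
  finally show ?thesis .
qed

end

lemma vdist_le_coupling:
  fixes f :: "'c \<Rightarrow> 'a::countable" and g :: "'c \<Rightarrow> 'b::countable" and \<phi> :: "'a \<Rightarrow> 'b"
  assumes M: "prob_space M"
    and f: "f \<in> M \<rightarrow>\<^sub>M count_space UNIV" "distr M (count_space UNIV) f = measure_pmf p"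
    and g: "g \<in> M \<rightarrow>\<^sub>M count_space UNIV" "distr M (count_space UNIV) g = measure_pmf q"
    and D: "D \<in> sets M" "{x\<in>space M. g x \<noteq> \<phi> (f x)} \<subseteq> D"
  shows "vdist q (map_pmf \<phi> p) \<le> 2 * measure M D"
proof -
  interpret prob_space M
    by (rule M)
  have \<phi>f: "\<phi> \<circ> f \<in> M \<rightarrow>\<^sub>M count_space UNIV"
    by (rule measurable_comp[OF f(1) measurable_count_space])
  have law_\<phi>f: "distr M (count_space UNIV) (\<phi> \<circ> f) = measure_pmf (map_pmf \<phi> p)"
    by (simp add: map_pmf_rep_eq f(2) distr_distr[OF measurable_count_space f(1), symmetric])
  have pmf_law: "pmf r b = measure M (h -` {b} \<inter> space M)"
    if "h \<in> M \<rightarrow>\<^sub>M count_space UNIV" "distr M (count_space UNIV) h = measure_pmf r" for h :: "'c \<Rightarrow> 'b" and r b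
    using measure_distr[OF that(1), of "{b}"] that(2) by (simp add: measure_pmf_single)
  have "vdist q (map_pmf \<phi> p)
      = (\<Sum>\<^sub>\<infinity>b. \<bar>measure M (g -` {b} \<inter> space M) - measure M ((\<phi> \<circ> f) -` {b} \<inter> space M)\<bar>)"
    unfolding vdist_def pmf_law[OF g] pmf_law[OF \<phi>f law_\<phi>f] ..
  also have "\<dots> \<le> 2 * measure M D"
    using D by (intro coupling_inequality[OF g(1) \<phi>f D(1)]) auto
  finally show ?thesis .
qed


section \<open>The transport map between two bucket structures\<close>

locale bucket_pair = X: weight_seq wx + Y: weight_seq wy for wx wy :: "nat \<Rightarrow> real" +
  assumes wy_antimono: "\<And>i j. i \<le> j \<Longrightarrow> wy j \<le> wy i"
begin

definition transport :: "nat \<Rightarrow> nat" where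
  "transport i = Y.bucket (X.cum i)"

text \<open>If delta is not sent to its own Y-bucket j, then its X-bucket straddles the right end
  of the Y-bucket j, so it is determined by j alone.\<close>
lemma straddle:
  assumes d: "\<delta> \<in> {0..<1}" and j: "transport (X.bucket \<delta>) = j" and n: "Y.bucket \<delta> \<noteq> j"
  shows "X.bucket (Y.cum (Suc j)) = X.bucket \<delta>"
proof -
  let ?a = "X.cum (X.bucket \<delta>)"
  have a: "?a \<in> {0..<1}" "?a \<le> \<delta>"
    using X.bucket_left_end[OF d] X.bucket[OF d] by auto
  have ya: "Y.cum j \<le> ?a" "?a < Y.cum (Suc j)"
    using j Y.bucket_eq[OF a(1)] by (auto simp: transport_def)
  have c: "Y.cum (Suc j) \<le> \<delta>"
    using n Y.bucket_eq[OF d, of j] ya a by auto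
  then have "Y.cum (Suc j) \<in> {0..<1}"
    using d Y.cum_nonneg by auto
  then show ?thesis
    using X.bucket_eq[of "Y.cum (Suc j)" "X.bucket \<delta>"] ya c X.bucket[OF d] by auto
qed

definition light_leak :: "real \<Rightarrow> nat \<Rightarrow> real set" where
  "light_leak \<gamma> j = {\<delta>\<in>{0..<1}. wx (X.bucket \<delta>) \<le> exp (- \<gamma>) * wy j
      \<and> transport (X.bucket \<delta>) = j \<and> Y.bucket \<delta> \<noteq> j}"

lemma light_leak_sets: "light_leak \<gamma> j \<in> sets uniform01"
  unfolding light_leak_def
  using countable_pred_sets[OF X.bucket_measurable Y.bucket_measurable,
      of "\<lambda>i k. wx i \<le> exp (- \<gamma>) * wy j \<and> transport i = j \<and> k \<noteq> j"]
  by simp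

text \<open>By the straddle lemma these points fill at most one light X-bucket.\<close>
lemma measure_light_leak: "measure uniform01 (light_leak \<gamma> j) \<le> exp (- \<gamma>) * wy j"
proof (cases "light_leak \<gamma> j = {}")
  case True
  then show ?thesis
    using Y.nonneg[of j] by simp
next
  case False
  then obtain \<delta>0 where d0: "\<delta>0 \<in> light_leak \<gamma> j"
    by auto
  let ?i = "X.bucket \<delta>0"
  have "X.bucket \<delta> = ?i" if "\<delta> \<in> light_leak \<gamma> j" for \<delta>
    using straddle[of \<delta> j] straddle[of \<delta>0 j] that d0 by (simp add: light_leak_def)
  then have "light_leak \<gamma> j \<subseteq> {\<delta>\<in>{0..<1}. X.bucket \<delta> = ?i}"
    unfolding light_leak_def by blast
  then have "measure uniform01 (light_leak \<gamma> j) \<le> measure uniform01 {\<delta>\<in>{0..<1}. X.bucket \<delta> = ?i}"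
    by (intro uniform01.finite_measure_mono X.bucket_fibre_sets)
  also have "\<dots> = wx ?i"
    by (rule X.measure_bucket_fibre)
  also have "\<dots> \<le> exp (- \<gamma>) * wy j"
    using d0 by (simp add: light_leak_def)
  finally show ?thesis .
qed

text \<open>A heavy X-bucket puts delta into the set where c^x - c^y < gamma, because the Y-bucket
  of delta is no heavier than the Y-bucket in which the X-bucket starts.\<close>
lemma heavy_in_small_gap:
  assumes d: "\<delta> \<in> {0..<1}" and heavy: "exp (- \<gamma>) * wy (transport (X.bucket \<delta>)) < wx (X.bucket \<delta>)"
  shows "ln (1 / wx (X.bucket \<delta>)) - ln (1 / wy (Y.bucket \<delta>)) < \<gamma>"
proof -
  let ?i = "X.bucket \<delta>" and ?j = "Y.bucket \<delta>"
  have "transport ?i \<le> ?j"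
    unfolding transport_def using X.bucket_left_end[OF d] X.bucket[OF d]
    by (intro Y.bucket_mono[OF _ d]) auto
  then have "exp (- \<gamma>) * wy ?j < wx ?i"
    using wy_antimono heavy by (smt (verit) exp_gt_zero mult_left_mono)
  then have "wy ?j < wx ?i * exp \<gamma>"
    by (simp add: exp_minus field_simps)
  moreover have pos: "0 < wx ?i" "0 < wy ?j"
    using X.bucket_pos[OF d] Y.bucket_pos[OF d] by auto
  ultimately have "ln (wy ?j) < ln (wx ?i * exp \<gamma>)"
    by simp
  also have "\<dots> = ln (wx ?i) + \<gamma>"
    using pos by (simp add: ln_mult)
  finally have "ln (wy ?j) < ln (wx ?i) + \<gamma>" .
  then show ?thesis
    using pos by (simp add: ln_div)
qed

lemma mismatch_bound:
  "measure uniform01 {\<delta>\<in>{0..<1}. transport (X.bucket \<delta>) \<noteq> Y.bucket \<delta>}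
     \<le> exp (- \<gamma>) + measure uniform01 {\<delta>\<in>{0..<1}. ln (1 / wx (X.bucket \<delta>)) - ln (1 / wy (Y.bucket \<delta>)) < \<gamma>}"
proof -
  define E where "E = {\<delta>\<in>{0..<1}. ln (1 / wx (X.bucket \<delta>)) - ln (1 / wy (Y.bucket \<delta>)) < \<gamma>}"
  have E: "E \<in> sets uniform01"
    unfolding E_def using countable_pred_sets[OF X.bucket_measurable Y.bucket_measurable] by simp
  have L: "range (light_leak \<gamma>) \<subseteq> sets uniform01" "disjoint_family (light_leak \<gamma>)"
    using light_leak_sets by (auto simp: disjoint_family_on_def light_leak_def)
  have "(\<lambda>j. measure uniform01 (light_leak \<gamma> j)) sums measure uniform01 (\<Union>j. light_leak \<gamma> j)"
    by (rule uniform01.finite_measure_UNION[OF L])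
  then have leak: "measure uniform01 (\<Union>j. light_leak \<gamma> j) \<le> exp (- \<gamma>)"
    using sums_le[OF measure_light_leak _ sums_mult[OF Y.sums_one, of "exp (- \<gamma>)"]] by simp
  have "{\<delta>\<in>{0..<1}. transport (X.bucket \<delta>) \<noteq> Y.bucket \<delta>} \<subseteq> E \<union> (\<Union>j. light_leak \<gamma> j)"
    using heavy_in_small_gap by (force simp: E_def light_leak_def not_less)
  then have "measure uniform01 {\<delta>\<in>{0..<1}. transport (X.bucket \<delta>) \<noteq> Y.bucket \<delta>}
      \<le> measure uniform01 (E \<union> (\<Union>j. light_leak \<gamma> j))"
    using E L by (intro uniform01.finite_measure_mono) auto
  also have "\<dots> \<le> measure uniform01 E + measure uniform01 (\<Union>j. light_leak \<gamma> j)"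
    using E L by (intro measure_subadditive) (auto simp: uniform01.emeasure_finite)
  finally show ?thesis
    using leak unfolding E_def by simp
qed

end


theorem proposition1:
  fixes PX :: "'a::countable pmf" and PY :: "'b::countable pmf"
    and \<epsilon> \<gamma> :: real
  assumes "0 < \<epsilon>" "\<epsilon> < 1" "0 < \<gamma>" "exp (- \<gamma>) \<le> \<epsilon>"
  shows "\<exists>\<phi> :: 'a \<Rightarrow> 'b.
           vdist PY (map_pmf \<phi> PX)
             \<le> 9 * \<epsilon> + 10 * measure lborel {\<delta> \<in> {0..<1}. cfun PX \<delta> - cfun PY \<delta> < \<gamma>}"
proof -
  interpret B: bucket_pair "weights PX" "weights PY"
    by (intro bucket_pair.intro bucket_pair_axioms.intro weights_weight_seq weights_antimono)
  let ?kx = "B.X.bucket" and ?ky = "B.Y.bucket"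
  define \<phi> where "\<phi> a = enum PY (B.transport (inv_into (pos_index PX) (enum PX) a))" for a
  define Mis where "Mis = {\<delta>\<in>{0..<1}. B.transport (?kx \<delta>) \<noteq> ?ky \<delta>}"
  define E where "E = {\<delta> \<in> {0..<1}. cfun PX \<delta> - cfun PY \<delta> < \<gamma>}"
  have "\<phi> (enum PX (?kx \<delta>)) = enum PY (B.transport (?kx \<delta>))" if "\<delta> \<in> {0..<1}" for \<delta>
  proof -
    have "?kx \<delta> \<in> pos_index PX"
      using B.X.bucket_pos[OF that] weights_pos_iff by blast
    then show ?thesis
      by (simp add: \<phi>_def inv_into_f_f[OF bij_betw_imp_inj_on[OF enum_bij]])
  qed
  then have "{\<delta>\<in>space uniform01. enum PY (?ky \<delta>) \<noteq> \<phi> (enum PX (?kx \<delta>))} \<subseteq> Mis"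
    by (auto simp: Mis_def)
  moreover have "Mis \<in> sets uniform01"
    unfolding Mis_def using countable_pred_sets[OF B.X.bucket_measurable B.Y.bucket_measurable] by simp
  ultimately have "vdist PY (map_pmf \<phi> PX) \<le> 2 * measure uniform01 Mis"
    using uniform01.prob_space_axioms distr_enum_bucket[of PX] distr_enum_bucket[of PY]
      B.X.bucket_measurable B.Y.bucket_measurable
    by (intro vdist_le_coupling) (auto intro: measurable_compose[OF _ measurable_count_space])
  also have "measure uniform01 Mis \<le> exp (- \<gamma>) + measure uniform01 E"
    using B.mismatch_bound[of \<gamma>] unfolding Mis_def E_def by (simp add: cfun_bucket cong: conj_cong)
  also have "measure uniform01 E = measure lborel E"
    unfolding E_def by (rule measure_uniform01) auto
  finally have "vdist PY (map_pmf \<phi> PX) \<le> 2 * (\<epsilon> + measure lborel E)"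
    using assms(4) by simp
  then have "vdist PY (map_pmf \<phi> PX) \<le> 9 * \<epsilon> + 10 * measure lborel E"
    using assms(1) measure_nonneg[of lborel E] by argo
  then show ?thesis
    unfolding E_def by blast
qed

end
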